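(* Every voting rule in the PJR-Exact family satisfies PJR: for every ballot profile $\mathcal{A}=(A_1,\dots,A_n)$ over a candidate set $C$ and every committee size $k\le |C|$, every committee $W$ that can be produced by a rule of the PJR-Exact family provides PJR for $(\mathcal{A},k)$.
   Context: Setting: voters $N=\{1,\dots,n\}$, candidates $C=\{c_1,\dots,c_m\}$, each voter $i$ submits an approval ballot $A_i\subseteq C$; $\mathcal{A}=(A_1,\dots,A_n)$; $k$ is a positive integer with $k\le |C|$. The exact quota is $q=n/k$. For $c\in C$, $N_c=\{i\in N: c\in A_i\}$. EJR/PJR: for $\ell\in\{1,\dots,k\}$, a set $N^*\subseteq N$ is $\ell$-cohesive if $|N^*|\ge \ell n/k$ and $|\bigcap_{i\in N^*}A_i|\ge \ell$. A committee $W\subseteq C$ with $|W|=k$ provides EJR (resp. PJR) for $(\mathcal{A},k)$ if for every $\ell\in\{1,\dots,k\}$ and every $\ell$-cohesive $N^*$ there is $i\in N^*$ with $|A_i\cap W|\ge \ell$ (resp. $|W\cap\bigcup_{i\in N^*}A_i|\ge \ell$). PJR-Exact family: a rule in this family is any iterative procedure that selects candidates $w_1,\dots,w_k$ one at a time, with $W_0=\emptyset$, $W_j=W_{j-1}\cup\{w_j\}$, $w_j\in C\setminus W_{j-1}$, output $W=W_k$, and maintains vote fractions $f_i^j$ ($i\in N$, $j=0,\dots,k$) with $f_i^0=1$, $0\le f_i^j\le f_i^{j-1}$, such that at every iteration $j$: (a) $f_i^j=f_i^{j-1}$ for $i\notin N_{w_j}$; (b) letting $s=\sum_{i\in N_{w_j}}f_i^{j-1}$,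 if $s>q$ then $\sum_{i\in N_{w_j}}(f_i^{j-1}-f_i^j)=q$, and if $s\le q$ then $f_i^j=0$ for all $i\in N_{w_j}$; (c) if some $c\in C\setminus W_{j-1}$ satisfies $\sum_{i\in N_c}f_i^{j-1}\ge q$, then $\sum_{i\in N_{w_j}}f_i^{j-1}\ge q$. All choices not constrained by (a)–(c) are arbitrary. *)

theory Defs
  imports Complex_Main
begin

definition voters :: "nat \<Rightarrow> nat set" where
  "voters n = {1..n}"

definition supporters :: "nat \<Rightarrow> (nat \<Rightarrow> 'c set) \<Rightarrow> 'c \<Rightarrow> nat set" where
  "supporters n A c = {i \<in> voters n. c \<in> A i}"

definition quota :: "nat \<Rightarrow> nat \<Rightarrow> real" where
  "quota n k = real n / real k"

definition prefix_committee :: "(nat \<Rightarrow> 'c) \<Rightarrow> nat \<Rightarrow> 'c set" where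
  "prefix_committee w j = w ` {1..j}"

text \<open>A run of a rule of the PJR-Exact family: selected candidates w 1..w k and
  vote fractions f j i (iteration j, voter i).\<close>
definition pjr_exact_run ::
  "nat \<Rightarrow> 'c set \<Rightarrow> (nat \<Rightarrow> 'c set) \<Rightarrow> nat \<Rightarrow> (nat \<Rightarrow> 'c) \<Rightarrow> (nat \<Rightarrow> nat \<Rightarrow> real) \<Rightarrow> bool"
where
  "pjr_exact_run n C A k w f \<longleftrightarrow>
     (\<forall>i \<in> voters n. f 0 i = 1) \<and>
     (\<forall>j \<in> {1..k}.
        w j \<in> C - prefix_committee w (j - 1) \<and>
        (\<forall>i \<in> voters n. 0 \<le> f j i \<and> f j i \<le> f (j - 1) i) \<and>
        (\<forall>i \<in> voters n - supporters n A (w j). f j i = f (j - 1) i) \<and>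
        (let s = (\<Sum>i \<in> supporters n A (w j). f (j - 1) i) in
           (s > quota n k \<longrightarrow>
              (\<Sum>i \<in> supporters n A (w j). f (j - 1) i - f j i) = quota n k) \<and>
           (s \<le> quota n k \<longrightarrow> (\<forall>i \<in> supporters n A (w j). f j i = 0))) \<and>
        ((\<exists>c \<in> C - prefix_committee w (j - 1).
            (\<Sum>i \<in> supporters n A c. f (j - 1) i) \<ge> quota n k) \<longrightarrow>
           (\<Sum>i \<in> supporters n A (w j). f (j - 1) i) \<ge> quota n k))"

definition provides_PJR :: "nat \<Rightarrow> 'c set \<Rightarrow> (nat \<Rightarrow> 'c set) \<Rightarrow> nat \<Rightarrow> 'c set \<Rightarrow> bool" where
  "provides_PJR n C A k W \<longleftrightarrow>
     W \<subseteq> C \<and> card W = k \<and>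
     (\<forall>l \<in> {1..k}. \<forall>S \<subseteq> voters n.
        (real (card S) \<ge> real l * real n / real k \<and>
         card (C \<inter> (\<Inter>i \<in> S. A i)) \<ge> l) \<longrightarrow>
        card (W \<inter> (\<Union>i \<in> S. A i)) \<ge> l)"

end

theory Submission
  imports Defs
begin

text \<open>Let \<open>S\<close> be \<open>\<ell>\<close>-cohesive and suppose fewer than \<open>\<ell>\<close> winners are approved by members
  of \<open>S\<close>. Then some commonly approved candidate \<open>c\<close> is never elected. The voters of \<open>S\<close> only
  pay, at most \<open>q\<close> each time, for winners some of them approve, so their remaining budget
  never drops below \<open>\<ell> q - (\<ell> - 1) q = q\<close>. Hence \<open>c\<close> keeps support at least \<open>q\<close>, so by rule (c)
  every winner has support at least \<open>q\<close> and exactly \<open>q\<close> is spent in each of the \<open>k\<close> rounds.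
  This exhausts the total budget \<open>n = k q\<close>, contradicting that \<open>S\<close> still holds at least \<open>q > 0\<close>.\<close>

locale pjr_exact =
  fixes n :: nat and C :: "'c set" and A :: "nat \<Rightarrow> 'c set" and k :: nat
    and w :: "nat \<Rightarrow> 'c" and f :: "nat \<Rightarrow> nat \<Rightarrow> real"
  assumes run: "pjr_exact_run n C A k w f"
    and n_pos: "1 \<le> n" and k_pos: "0 < k"
begin

abbreviation q :: real where "q \<equiv> quota n k"

abbreviation N :: "'c \<Rightarrow> nat set" where "N \<equiv> supporters n A"

lemma quota_pos: "0 < q"
  using n_pos k_pos by (simp add: quota_def)

lemma finite_voters: "finite (voters n)"
  by (simp add: voters_def)

lemma supporters_subset_voters: "N c \<subseteq> voters n"
  by (auto simp: supporters_def)

lemma finite_supporters: "finite (N c)"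
  using finite_subset[OF supporters_subset_voters finite_voters] .

lemma fraction_initial: "i \<in> voters n \<Longrightarrow> f 0 i = 1"
  using run by (simp add: pjr_exact_run_def)

context
  fixes j :: nat
  assumes j: "j \<in> {1..k}"
begin

lemma winner_new: "w j \<in> C - prefix_committee w (j - 1)"
  using run j by (simp add: pjr_exact_run_def)

lemma fraction_decreasing: "i \<in> voters n \<Longrightarrow> 0 \<le> f j i \<and> f j i \<le> f (j - 1) i"
  using run j by (simp add: pjr_exact_run_def)

lemma fraction_unchanged: "i \<in> voters n \<Longrightarrow> i \<notin> N (w j) \<Longrightarrow> f j i = f (j - 1) i"
  using run j by (simp add: pjr_exact_run_def)

lemma winner_has_quota:
  assumes "c \<in> C - prefix_committee w (j - 1)" and "q \<le> (\<Sum>i\<in>N c. f (j - 1) i)"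
  shows "q \<le> (\<Sum>i\<in>N (w j). f (j - 1) i)"
  using run j assms unfolding pjr_exact_run_def by blast

lemma spending_rule:
  "((\<Sum>i\<in>N (w j). f (j - 1) i) > q \<longrightarrow> (\<Sum>i\<in>N (w j). f (j - 1) i - f j i) = q) \<and>
   ((\<Sum>i\<in>N (w j). f (j - 1) i) \<le> q \<longrightarrow> (\<forall>i\<in>N (w j). f j i = 0))"
  using run j unfolding pjr_exact_run_def Let_def by blast

lemma spent_eq_support_if_le:
  assumes "(\<Sum>i\<in>N (w j). f (j - 1) i) \<le> q"
  shows "(\<Sum>i\<in>N (w j). f (j - 1) i - f j i) = (\<Sum>i\<in>N (w j). f (j - 1) i)"
  using spending_rule assms by (intro sum.cong) auto

lemma spent_le_quota: "(\<Sum>i\<in>N (w j). f (j - 1) i - f j i) \<le> q"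
  using spending_rule spent_eq_support_if_le by force

lemma spent_eq_quota:
  assumes "q \<le> (\<Sum>i\<in>N (w j). f (j - 1) i)"
  shows "(\<Sum>i\<in>N (w j). f (j - 1) i - f j i) = q"
  using spending_rule spent_eq_support_if_le assms by force

lemma spent_outside_supporters:
  assumes "S \<subseteq> voters n"
  shows "(\<Sum>i\<in>S. f (j - 1) i - f j i) = (\<Sum>i\<in>S \<inter> N (w j). f (j - 1) i - f j i)"
proof (rule sum.mono_neutral_right)
  show "finite S"
    using finite_subset[OF assms finite_voters] .
  show "\<forall>i\<in>S - S \<inter> N (w j). f (j - 1) i - f j i = 0"
    using assms fraction_unchanged by fastforce
qed auto

lemma group_spent_le_quota:
  assumes "S \<subseteq> voters n"
  shows "(\<Sum>i\<in>S. f (j - 1) i - f j i) \<le> q"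
proof -
  have "(\<Sum>i\<in>S. f (j - 1) i - f j i) = (\<Sum>i\<in>S \<inter> N (w j). f (j - 1) i - f j i)"
    using spent_outside_supporters[OF assms] .
  also have "\<dots> \<le> (\<Sum>i\<in>N (w j). f (j - 1) i - f j i)"
    using fraction_decreasing supporters_subset_voters
    by (intro sum_mono2 finite_supporters) auto
  also have "\<dots> \<le> q"
    by (rule spent_le_quota)
  finally show ?thesis .
qed

lemma group_spent_zero:
  assumes "S \<subseteq> voters n" and "w j \<notin> (\<Union>i\<in>S. A i)"
  shows "(\<Sum>i\<in>S. f (j - 1) i - f j i) = 0"
proof -
  have "S \<inter> N (w j) = {}"
    using assms(2) by (auto simp: supporters_def)
  then show ?thesis
    using spent_outside_supporters[OF assms(1)] by simp
qed

lemma total_spent_eq_quota: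
  assumes "q \<le> (\<Sum>i\<in>N (w j). f (j - 1) i)"
  shows "(\<Sum>i\<in>voters n. f (j - 1) i - f j i) = q"
  using spent_outside_supporters[OF order_refl] spent_eq_quota[OF assms]
    Int_absorb1[OF supporters_subset_voters] by simp

end

lemma fraction_nonneg: "j \<le> k \<Longrightarrow> i \<in> voters n \<Longrightarrow> 0 \<le> f j i"
  using fraction_initial fraction_decreasing[of j] by (cases j) auto

lemma group_budget_ge:
  assumes "S \<subseteq> voters n" and "j \<le> k"
  shows "real (card S) - q * card {t\<in>{1..j}. w t \<in> (\<Union>i\<in>S. A i)} \<le> (\<Sum>i\<in>S. f j i)"
  using assms(2)
proof (induction j)
  case 0
  then show ?case
    using assms(1) fraction_initial by (simp add: subset_iff)
next
  case (Suc j)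
  let ?U = "\<Union>i\<in>S. A i"
  have j: "Suc j \<in> {1..k}"
    using Suc.prems by simp
  have step: "(\<Sum>i\<in>S. f (Suc j) i) = (\<Sum>i\<in>S. f j i) - (\<Sum>i\<in>S. f j i - f (Suc j) i)"
    by (simp add: sum_subtractf)
  show ?case
  proof (cases "w (Suc j) \<in> ?U")
    case True
    have "{t\<in>{1..Suc j}. w t \<in> ?U} = insert (Suc j) {t\<in>{1..j}. w t \<in> ?U}"
      using True by auto
    then have "card {t\<in>{1..Suc j}. w t \<in> ?U} = card {t\<in>{1..j}. w t \<in> ?U} + 1"
      by simp
    then show ?thesis
      using Suc step group_spent_le_quota[OF j assms(1)] by (simp add: algebra_simps)
  next
    case False
    then have "{t\<in>{1..Suc j}. w t \<in> ?U} = {t\<in>{1..j}. w t \<in> ?U}"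
      by (auto simp: le_Suc_eq)
    then show ?thesis
      using Suc step group_spent_zero[OF j assms(1) False] by simp
  qed
qed

lemma total_budget_eq:
  assumes "\<forall>t\<in>{1..k}. q \<le> (\<Sum>i\<in>N (w t). f (t - 1) i)" and "j \<le> k"
  shows "(\<Sum>i\<in>voters n. f j i) = real n - q * j"
  using assms(2)
proof (induction j)
  case 0
  then show ?case
    using fraction_initial by (simp add: voters_def)
next
  case (Suc j)
  have j: "Suc j \<in> {1..k}"
    using Suc.prems by simp
  have "(\<Sum>i\<in>voters n. f (Suc j) i) =
        (\<Sum>i\<in>voters n. f j i) - (\<Sum>i\<in>voters n. f j i - f (Suc j) i)"
    by (simp add: sum_subtractf)
  then show ?case
    using Suc total_spent_eq_quota[OF j assms(1)[rule_format, OF j]] by (simp add: algebra_simps)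
qed

lemma group_budget_ge_quota:
  assumes S: "S \<subseteq> voters n" and large: "real l * q \<le> real (card S)"
    and few: "card {t\<in>{1..k}. w t \<in> (\<Union>i\<in>S. A i)} < l" and "j \<le> k"
  shows "q \<le> (\<Sum>i\<in>S. f j i)"
proof -
  let ?R = "{t\<in>{1..j}. w t \<in> (\<Union>i\<in>S. A i)}"
  have "card ?R \<le> card {t\<in>{1..k}. w t \<in> (\<Union>i\<in>S. A i)}"
    using \<open>j \<le> k\<close> by (intro card_mono) auto
  then have "Suc (card ?R) \<le> l"
    using few by linarith
  then have "real (card ?R) \<le> real l - 1"
    by (simp flip: of_nat_le_iff)
  then have "q * card ?R \<le> q * (real l - 1)"
    using quota_pos by (intro mult_left_mono) auto
  then show ?thesis
    using group_budget_ge[OF S \<open>j \<le> k\<close>] large by (simp add: algebra_simps)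
qed

lemma winners_inj: "inj_on w {1..k}"
proof (rule inj_onI)
  fix s t
  assume s: "s \<in> {1..k}" and t: "t \<in> {1..k}" and eq: "w s = w t"
  have "w s \<noteq> w t" if "s < t" "s \<in> {1..k}" "t \<in> {1..k}" for s t
  proof -
    have "w s \<in> prefix_committee w (t - 1)"
      using that by (auto simp: prefix_committee_def)
    then show ?thesis
      using winner_new[OF that(3)] by auto
  qed
  then show "s = t"
    using s t eq by (metis linorder_neqE_nat)
qed

lemma card_committee: "card (prefix_committee w k) = k"
  using card_image[OF winners_inj] by (simp add: prefix_committee_def)

lemma committee_subset: "prefix_committee w k \<subseteq> C"
  using winner_new by (auto simp: prefix_committee_def)

lemma card_approved_rounds:
  "card {t\<in>{1..k}. w t \<in> U} = card (prefix_committee w k \<inter> U)"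
proof -
  have "w ` {t\<in>{1..k}. w t \<in> U} = prefix_committee w k \<inter> U"
    by (auto simp: prefix_committee_def)
  moreover have "inj_on w {t\<in>{1..k}. w t \<in> U}"
    using winners_inj by (rule inj_on_subset) auto
  ultimately show ?thesis
    using card_image by metis
qed

lemma unelected_common_candidate:
  assumes "S \<noteq> {}" and "card (prefix_committee w k \<inter> (\<Union>i\<in>S. A i)) < l"
    and "l \<le> card (C \<inter> (\<Inter>i\<in>S. A i))"
  obtains c where "c \<in> C" "\<forall>i\<in>S. c \<in> A i" "c \<notin> prefix_committee w k"
proof -
  let ?W = "prefix_committee w k" and ?U = "\<Union>i\<in>S. A i"
  have "\<not> C \<inter> (\<Inter>i\<in>S. A i) \<subseteq> ?W \<inter> ?U"
  proof
    assume "C \<inter> (\<Inter>i\<in>S. A i) \<subseteq> ?W \<inter> ?U"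
    moreover have "finite (?W \<inter> ?U)"
      by (simp add: prefix_committee_def)
    ultimately have "card (C \<inter> (\<Inter>i\<in>S. A i)) \<le> card (?W \<inter> ?U)"
      using card_mono by blast
    then show False
      using assms(2,3) by linarith
  qed
  with assms(1) that show ?thesis
    by blast
qed

lemma cohesive_group_represented:
  assumes l: "l \<in> {1..k}" and S: "S \<subseteq> voters n"
    and large: "real l * real n / real k \<le> real (card S)"
    and cohesive: "l \<le> card (C \<inter> (\<Inter>i\<in>S. A i))"
  shows "l \<le> card (prefix_committee w k \<inter> (\<Union>i\<in>S. A i))"
proof (rule ccontr)
  let ?U = "\<Union>i\<in>S. A i"
  assume "\<not> ?thesis"
  then have fewer: "card (prefix_committee w k \<inter> ?U) < l"
    by simp
  then have few: "card {t\<in>{1..k}. w t \<in> ?U} < l"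
    using card_approved_rounds[of ?U] by linarith
  have large_q: "real l * q \<le> real (card S)"
    using large by (simp add: quota_def)
  moreover have "0 < real l * q"
    using quota_pos l by simp
  ultimately have "S \<noteq> {}"
    by auto
  then obtain c where c: "c \<in> C" "\<forall>i\<in>S. c \<in> A i" "c \<notin> prefix_committee w k"
    by (rule unelected_common_candidate[OF _ fewer cohesive])
  have budget: "q \<le> (\<Sum>i\<in>S. f j i)" if "j \<le> k" for j
    using group_budget_ge_quota[OF S large_q few that] .
  have "S \<subseteq> N c"
    using S c(2) by (auto simp: supporters_def)
  have winners_quota: "\<forall>t\<in>{1..k}. q \<le> (\<Sum>i\<in>N (w t). f (t - 1) i)"
  proof
    fix t
    assume t: "t \<in> {1..k}"
    have "(\<Sum>i\<in>S. f (t - 1) i) \<le> (\<Sum>i\<in>N c. f (t - 1) i)"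
      using \<open>S \<subseteq> N c\<close> fraction_nonneg[of "t - 1"] supporters_subset_voters t
      by (intro sum_mono2 finite_supporters) force+
    then have "q \<le> (\<Sum>i\<in>N c. f (t - 1) i)"
      using budget[of "t - 1"] t by force
    moreover have "c \<in> C - prefix_committee w (t - 1)"
      using c(1,3) t by (auto simp: prefix_committee_def)
    ultimately show "q \<le> (\<Sum>i\<in>N (w t). f (t - 1) i)"
      using winner_has_quota[OF t] by blast
  qed
  have "(\<Sum>i\<in>S. f k i) \<le> (\<Sum>i\<in>voters n. f k i)"
    using S fraction_nonneg[of k] by (intro sum_mono2 finite_voters) auto
  also have "\<dots> = 0"
    using total_budget_eq[OF winners_quota order_refl] k_pos by (simp add: quota_def)
  finally show False
    using budget[of k] quota_pos by simp
qed

end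

theorem mainTheorem1:
  fixes n k :: nat and C :: "'c set" and A :: "nat \<Rightarrow> 'c set"
    and w :: "nat \<Rightarrow> 'c" and f :: "nat \<Rightarrow> nat \<Rightarrow> real"
  assumes "finite C"
    and "1 \<le> n"
    and "0 < k" and "k \<le> card C"
    and "\<forall>i \<in> voters n. A i \<subseteq> C"
    and "pjr_exact_run n C A k w f"
  shows "provides_PJR n C A k (prefix_committee w k)"
proof -
  interpret pjr_exact n C A k w f
    using assms(2,3,6) by unfold_locales
  show ?thesis
    unfolding provides_PJR_def
    using committee_subset card_committee cohesive_group_represented by blast
qed

end
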